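(* Let $G$ be a circle of circumference $1$, let $x_1,\dots,x_n\in G$ be pairwise distinct with no two of them antipodal, and let $y_1,\dots,y_n\in G$. Let $\{x_i,x_j\}\in A$ be a nearly antipodal pair. If $$\sum_{k=1}^n d(x_i,x_k)+\sum_{k=1}^n d(x_j,x_k)>\sum_{k=1}^n d(x_i,y_k)+\sum_{k=1}^n d(x_j,y_k),$$ then $\alpha^Y_{ij}>\alpha^X_{ij}$.
   Context: $d(x,y)$ is the length of the shorter arc between $x,y$; $\hat{x}$ is the antipodal point of $x$. For points $p,q$ that are neither equal nor antipodal, $(p,q)$ denotes the shorter open arc and $[p,q]$ the shorter closed arc between them. Two distinct points $x_i,x_j$ ($i\ne j$) form a nearly antipodal pair if no $x_k$ lies in $(x_i,\hat{x}_j)$ or in $(x_j,\hat{x}_i)$; $A$ is the set of nearly antipodal pairs. The critical arc of $\{x_i,x_j\}\in A$ is $\mathrm{crit}(x_i,x_j)=G\setminus[\hat{x}_i,\hat{x}_j]$ (the long open arc between $\hat x_i$ and $\hat x_j$). $\alpha^X_{ij}=|\{k:x_k\in\mathrm{crit}(x_i,x_j)\}|$ and $\alpha^Y_{ij}=|\{k:y_k\in\mathrm{crit}(x_i,x_j)\}|$. *)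

theory Defs
  imports Complex_Main
begin

text \<open>The circle G of circumference 1 is modelled as the half-open interval [0,1) of reals,
  with the point t corresponding to arc-length position t (mod 1).\<close>

definition circG :: "real set" where
  "circG = {0..<1}"

definition cdist :: "real \<Rightarrow> real \<Rightarrow> real" where
  "cdist x y = min (frac (x - y)) (frac (y - x))"

definition antip :: "real \<Rightarrow> real" where
  "antip x = frac (x + 1/2)"

definition ccw_open_arc :: "real \<Rightarrow> real \<Rightarrow> real set" where
  "ccw_open_arc p q = {z \<in> circG. 0 < frac (z - p) \<and> frac (z - p) < frac (q - p)}"

text \<open>Shorter open arc (p,q), for p, q neither equal nor antipodal.\<close>
definition short_open_arc :: "real \<Rightarrow> real \<Rightarrow> real set" where
  "short_open_arc p q = (if frac (q - p) < 1/2 then ccw_open_arc p q else ccw_open_arc q p)"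

definition short_closed_arc :: "real \<Rightarrow> real \<Rightarrow> real set" where
  "short_closed_arc p q = short_open_arc p q \<union> {p, q}"

definition nearly_antipodal :: "nat \<Rightarrow> (nat \<Rightarrow> real) \<Rightarrow> nat \<Rightarrow> nat \<Rightarrow> bool" where
  "nearly_antipodal n x i j \<longleftrightarrow>
     i \<in> {1..n} \<and> j \<in> {1..n} \<and> i \<noteq> j \<and> x i \<noteq> x j \<and>
     (\<forall>k\<in>{1..n}. x k \<notin> short_open_arc (x i) (antip (x j)) \<and>
                  x k \<notin> short_open_arc (x j) (antip (x i)))"

definition crit :: "real \<Rightarrow> real \<Rightarrow> real set" where
  "crit a b = circG - short_closed_arc (antip a) (antip b)"

definition alpha :: "nat \<Rightarrow> (nat \<Rightarrow> real) \<Rightarrow> real \<Rightarrow> real \<Rightarrow> nat" where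
  "alpha n p a b = card {k \<in> {1..n}. p k \<in> crit a b}"

end

theory Submission imports Defs begin

(* Fix the nearly antipodal pair a = x_i, b = x_j and put D = d(a,b); since b is
   not antipodal to a, D < 1/2.  For a point z of the circle consider s(z) = d(a,z) + d(b,z):
   (1) if z lies outside crit(a,b), i.e. on the short arc between the antipodes of a and b,
       then s(z) = 1 - D;
   (2) if z lies on the short arc [a,b], then s(z) = D, and always s(z) >= D (triangle
       inequality).
   Near-antipodality forces every x_k in crit(a,b) onto the short arc [a,b], so
   sum_k s(x_k) = n(1-D) - (1-2D) alpha^X, while sum_k s(y_k) >= n(1-D) - (1-2D) alpha^Y.
   The hypothesis sum_k s(x_k) > sum_k s(y_k) then gives (1-2D) alpha^X < (1-2D) alpha^Y. *)

lemma frac_small_cases: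
  assumes "-1 \<le> t" "t < 2"
  shows "(t < 0 \<and> frac t = t + 1) \<or> (0 \<le> t \<and> t < 1 \<and> frac t = t) \<or> (1 \<le> t \<and> frac t = t - 1)"
proof -
  consider "t < 0" | "0 \<le> t \<and> t < 1" | "1 \<le> t" by linarith
  then show ?thesis
  proof cases
    case 1
    then have "floor t = -1" using assms by (simp add: floor_eq_iff)
    then show ?thesis using 1 by (simp add: frac_def)
  next
    case 2
    then show ?thesis by (simp add: frac_eq)
  next
    case 3
    then have "floor t = 1" using assms by (simp add: floor_eq_iff)
    then show ?thesis using 3 by (simp add: frac_def)
  qed
qed

lemma frac_diff:
  assumes "u \<in> circG" "v \<in> circG"
  shows "frac (u - v) = (if v \<le> u then u - v else u - v + 1)"
  using assms frac_small_cases[of "u - v"] by (auto simp: circG_def)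

lemma antip_eq:
  assumes "a \<in> circG"
  shows "(a < 1/2 \<and> antip a = a + 1/2) \<or> (1/2 \<le> a \<and> antip a = a - 1/2)"
  using assms frac_small_cases[of "a + 1/2"] by (auto simp: antip_def circG_def)

lemma antip_in_circG: "a \<in> circG \<Longrightarrow> antip a \<in> circG"
  using antip_eq[of a] by (auto simp: circG_def)

lemma cdist_eq:
  assumes "u \<in> circG" "v \<in> circG"
  shows "cdist u v = (if \<bar>u - v\<bar> \<le> 1/2 then \<bar>u - v\<bar> else 1 - \<bar>u - v\<bar>)"
  using assms unfolding cdist_def min_def by (simp add: frac_diff)

lemma not_antip_dist:
  assumes "a \<in> circG" "b \<in> circG" "b \<noteq> antip a"
  shows "\<bar>b - a\<bar> \<noteq> 1/2"
  using assms antip_eq[of a] by (auto simp: circG_def abs_if split: if_splits)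

lemma short_open_arc_iff:
  assumes "p \<in> circG" "q \<in> circG" "\<bar>q - p\<bar> \<noteq> 1/2"
  shows "z \<in> short_open_arc p q \<longleftrightarrow> z \<in> circG \<and>
    (if \<bar>q - p\<bar> < 1/2 then min p q < z \<and> z < max p q else z < min p q \<or> max p q < z)"
  using assms unfolding short_open_arc_def ccw_open_arc_def
  by (cases "z \<in> circG")
     (auto simp: frac_diff circG_def abs_if min_def max_def
       simp del: frac_gt_0_iff frac_eq_0_iff split: if_splits)

lemma short_closed_arc_iff:
  assumes "p \<in> circG" "q \<in> circG" "\<bar>q - p\<bar> \<noteq> 1/2" "z \<in> circG"
  shows "z \<in> short_closed_arc p q \<longleftrightarrow>
    (if \<bar>q - p\<bar> < 1/2 then min p q \<le> z \<and> z \<le> max p q else z \<le> min p q \<or> max p q \<le> z)"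
  using short_open_arc_iff[OF assms(1-3), of z] assms(4)
  unfolding short_closed_arc_def by (auto simp: min_def max_def)

lemma cdist_triangle:
  assumes "a \<in> circG" "b \<in> circG" "z \<in> circG"
  shows "cdist a b \<le> cdist a z + cdist b z"
proof -
  define h :: real where "h = 1/2"
  have "2 * h = 1" by (simp add: h_def)
  then show ?thesis
    using assms
    unfolding cdist_eq[OF assms(1,3)] cdist_eq[OF assms(2,3)] cdist_eq[OF assms(1,2)]
      h_def[symmetric] circG_def atLeastLessThan_iff
    by (smt (verit))
qed

lemma cdist_lt_half:
  assumes "a \<in> circG" "b \<in> circG" "b \<noteq> antip a"
  shows "cdist a b < 1/2"
  using cdist_eq[OF assms(1,2)] not_antip_dist[OF assms] by (auto simp: abs_minus_commute)

lemma cdist_sum_on_short_arc: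
  assumes a: "a \<in> circG" and b: "b \<in> circG" and z: "z \<in> circG" and ab: "b \<noteq> antip a"
    and arc: "z \<in> short_closed_arc a b"
  shows "cdist a z + cdist b z = cdist a b"
proof -
  define h :: real where "h = 1/2"
  have between: "if \<bar>b - a\<bar> < h then min a b \<le> z \<and> z \<le> max a b else z \<le> min a b \<or> max a b \<le> z"
    using arc short_closed_arc_iff[OF a b not_antip_dist[OF a b ab] z] by (simp add: h_def)
  have "\<bar>b - a\<bar> \<noteq> h" "2 * h = 1" using not_antip_dist[OF a b ab] by (auto simp: h_def)
  then show ?thesis
    using between a b z
    unfolding cdist_eq[OF a z] cdist_eq[OF b z] cdist_eq[OF a b] h_def[symmetric]
    unfolding circG_def atLeastLessThan_iff by (smt (z3))
qed

text \<open>On the short arc between the antipodes of a and b (the complement of the critical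
  arc), the two distances add up to the length 1 - d(a,b) of the long arc.\<close>
lemma cdist_sum_outside_crit:
  assumes a: "a \<in> circG" and b: "b \<in> circG" and z: "z \<in> circG"
    and ab: "a \<noteq> b" "b \<noteq> antip a" and out: "z \<notin> crit a b"
  shows "cdist a z + cdist b z = 1 - cdist a b"
proof -
  define h :: real where "h = 1/2"
  define A B where "A = antip a" and "B = antip b"
  have A: "A \<in> circG" and B: "B \<in> circG" using antip_in_circG a b by (auto simp: A_def B_def)
  have Aeq: "(a < h \<and> A = a + h) \<or> (h \<le> a \<and> A = a - h)"
    using antip_eq[OF a] by (simp add: A_def h_def)
  have Beq: "(b < h \<and> B = b + h) \<or> (h \<le> b \<and> B = b - h)"
    using antip_eq[OF b] by (simp add: B_def h_def)
  have ab_h: "\<bar>b - a\<bar> \<noteq> h" using not_antip_dist[OF a b ab(2)] by (simp add: h_def)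
  then have AB_h: "\<bar>B - A\<bar> \<noteq> 1/2" using Aeq Beq a b by (auto simp: h_def circG_def abs_if)
  have "z \<in> short_closed_arc A B" using z out by (simp add: crit_def A_def B_def)
  then have between: "if \<bar>B - A\<bar> < h then min A B \<le> z \<and> z \<le> max A B else z \<le> min A B \<or> max A B \<le> z"
    using short_closed_arc_iff[OF A B AB_h z] by (simp add: h_def)
  have coords: "0 \<le> a" "a < 1" "0 \<le> b" "b < 1" "0 \<le> z" "z < 1"
    using a b z by (auto simp: circG_def)
  have "2 * h = 1" by (simp add: h_def)
  with Aeq Beq have "(if \<bar>a - z\<bar> \<le> h then \<bar>a - z\<bar> else 1 - \<bar>a - z\<bar>)
      + (if \<bar>b - z\<bar> \<le> h then \<bar>b - z\<bar> else 1 - \<bar>b - z\<bar>)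
      = 1 - (if \<bar>a - b\<bar> \<le> h then \<bar>a - b\<bar> else 1 - \<bar>a - b\<bar>)"
    using between coords ab_h ab(1) by (elim disjE conjE; smt (verit))
  then show ?thesis
    unfolding cdist_eq[OF a z] cdist_eq[OF b z] cdist_eq[OF a b] h_def .
qed

text \<open>A point of the critical arc that avoids the arcs (a, antip b), (b, antip a) and both
  antipodes lies on the short arc [a,b]; this is where near-antipodality is used.\<close>
lemma crit_point_on_short_arc:
  assumes a: "a \<in> circG" and b: "b \<in> circG" and z: "z \<in> circG"
    and ab: "a \<noteq> b" "b \<noteq> antip a"
    and c: "z \<in> crit a b" "z \<notin> short_open_arc a (antip b)" "z \<notin> short_open_arc b (antip a)"
      "z \<noteq> antip a" "z \<noteq> antip b"
  shows "z \<in> short_closed_arc a b"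
proof -
  define h :: real where "h = 1/2"
  define A B where "A = antip a" and "B = antip b"
  have A: "A \<in> circG" and B: "B \<in> circG" using antip_in_circG a b by (auto simp: A_def B_def)
  have Aeq: "(a < h \<and> A = a + h) \<or> (h \<le> a \<and> A = a - h)"
    using antip_eq[OF a] by (simp add: A_def h_def)
  have Beq: "(b < h \<and> B = b + h) \<or> (h \<le> b \<and> B = b - h)"
    using antip_eq[OF b] by (simp add: B_def h_def)
  have ab_h: "\<bar>b - a\<bar> \<noteq> h" using not_antip_dist[OF a b ab(2)] by (simp add: h_def)
  have AB_h: "\<bar>B - A\<bar> \<noteq> 1/2" using ab_h Aeq Beq a b by (auto simp: h_def circG_def abs_if)
  have aB_h: "\<bar>B - a\<bar> \<noteq> 1/2" using ab(1) Beq a b by (auto simp: h_def circG_def abs_if)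
  have bA_h: "\<bar>A - b\<bar> \<noteq> 1/2" using ab(1) Aeq a b by (auto simp: h_def circG_def abs_if)
  have "z \<notin> short_open_arc A B" using c(1) by (simp add: crit_def short_closed_arc_def A_def B_def)
  then have nAB: "\<not> (if \<bar>B - A\<bar> < h then min A B < z \<and> z < max A B else z < min A B \<or> max A B < z)"
    using short_open_arc_iff[OF A B AB_h, of z] z by (simp add: h_def)
  have naB: "\<not> (if \<bar>B - a\<bar> < h then min a B < z \<and> z < max a B else z < min a B \<or> max a B < z)"
    using short_open_arc_iff[OF a B aB_h, of z] z c(2) by (simp add: h_def B_def)
  have nbA: "\<not> (if \<bar>A - b\<bar> < h then min b A < z \<and> z < max b A else z < min b A \<or> max b A < z)"
    using short_open_arc_iff[OF b A bA_h, of z] z c(3) by (simp add: h_def A_def)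
  have "2 * h = 1" "z \<noteq> A" "z \<noteq> B" using c(4,5) by (auto simp: h_def A_def B_def)
  then have "if \<bar>b - a\<bar> < h then min a b \<le> z \<and> z \<le> max a b else z \<le> min a b \<or> max a b \<le> z"
    using Aeq Beq nAB naB nbA ab_h ab(1) a b z unfolding circG_def atLeastLessThan_iff by (smt (z3))
  then show ?thesis
    using short_closed_arc_iff[OF a b not_antip_dist[OF a b ab(2)] z] by (simp add: h_def)
qed

lemma sum_two_valued:
  assumes "finite S"
  shows "(\<Sum>k\<in>S. if P k then lo else hi) = real (card S) * hi - (hi - lo) * real (card {k\<in>S. P k})"
proof -
  have "S = {k\<in>S. P k} \<union> {k\<in>S. \<not> P k}" by blast
  then have "card S = card {k\<in>S. P k} + card {k\<in>S. \<not> P k}"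
    using assms by (metis (no_types, lifting) card_Un_disjoint disjoint_iff finite_Un mem_Collect_eq)
  then show ?thesis
    using assms by (simp add: sum.If_cases Int_def algebra_simps)
qed

lemma pair_distance_sum_lower:
  assumes a: "a \<in> circG" and b: "b \<in> circG" and ab: "a \<noteq> b" "b \<noteq> antip a"
    and p: "\<forall>k\<in>{1..n}. p k \<in> circG"
  shows "real n * (1 - cdist a b) - (1 - 2 * cdist a b) * real (alpha n p a b)
      \<le> (\<Sum>k=1..n. cdist a (p k)) + (\<Sum>k=1..n. cdist b (p k))"
proof -
  have "(if p k \<in> crit a b then cdist a b else 1 - cdist a b) \<le> cdist a (p k) + cdist b (p k)"
    if "k \<in> {1..n}" for k
    using p that cdist_triangle[OF a b] cdist_sum_outside_crit[OF a b _ ab] by auto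
  then have "(\<Sum>k=1..n. if p k \<in> crit a b then cdist a b else 1 - cdist a b)
      \<le> (\<Sum>k=1..n. cdist a (p k) + cdist b (p k))"
    by (rule sum_mono)
  then show ?thesis by (simp add: sum_two_valued sum.distrib alpha_def algebra_simps)
qed

text \<open>Exact value of the total distance for points avoiding the arcs (a, antip b),
  (b, antip a) and both antipodes, as the x_k do for a nearly antipodal pair.\<close>
lemma pair_distance_sum_exact:
  assumes a: "a \<in> circG" and b: "b \<in> circG" and ab: "a \<noteq> b" "b \<noteq> antip a"
    and p: "\<forall>k\<in>{1..n}. p k \<in> circG"
    and avoid: "\<forall>k\<in>{1..n}. p k \<notin> short_open_arc a (antip b) \<and> p k \<notin> short_open_arc b (antip a)
      \<and> p k \<noteq> antip a \<and> p k \<noteq> antip b"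
  shows "(\<Sum>k=1..n. cdist a (p k)) + (\<Sum>k=1..n. cdist b (p k))
      = real n * (1 - cdist a b) - (1 - 2 * cdist a b) * real (alpha n p a b)"
proof -
  have "cdist a (p k) + cdist b (p k) = (if p k \<in> crit a b then cdist a b else 1 - cdist a b)"
    if "k \<in> {1..n}" for k
    using p avoid that ab crit_point_on_short_arc[OF a b _ ab] cdist_sum_on_short_arc[OF a b _ ab(2)]
      cdist_sum_outside_crit[OF a b _ ab] by auto
  then have "(\<Sum>k=1..n. cdist a (p k) + cdist b (p k))
      = (\<Sum>k=1..n. if p k \<in> crit a b then cdist a b else 1 - cdist a b)"
    by (rule sum.cong[OF refl])
  then show ?thesis by (simp add: sum_two_valued sum.distrib alpha_def algebra_simps)
qed

theorem mainTheorem8: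
  fixes n :: nat and x y :: "nat \<Rightarrow> real" and i j :: nat
  assumes xG: "\<forall>k\<in>{1..n}. x k \<in> circG"
    and yG: "\<forall>k\<in>{1..n}. y k \<in> circG"
    and distinct: "\<forall>k\<in>{1..n}. \<forall>l\<in>{1..n}. k \<noteq> l \<longrightarrow> x k \<noteq> x l"
    and nonantip: "\<forall>k\<in>{1..n}. \<forall>l\<in>{1..n}. x l \<noteq> antip (x k)"
    and A: "nearly_antipodal n x i j"
    and ineq: "(\<Sum>k=1..n. cdist (x i) (x k)) + (\<Sum>k=1..n. cdist (x j) (x k))
               > (\<Sum>k=1..n. cdist (x i) (y k)) + (\<Sum>k=1..n. cdist (x j) (y k))"
  shows "alpha n y (x i) (x j) > alpha n x (x i) (x j)"
proof -
  have ij: "i \<in> {1..n}" "j \<in> {1..n}" "x i \<noteq> x j"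
    using A by (auto simp: nearly_antipodal_def)
  have a: "x i \<in> circG" and b: "x j \<in> circG" using xG ij by auto
  have ab: "x i \<noteq> x j" "x j \<noteq> antip (x i)" using ij nonantip by auto
  have avoid: "\<forall>k\<in>{1..n}. x k \<notin> short_open_arc (x i) (antip (x j))
      \<and> x k \<notin> short_open_arc (x j) (antip (x i)) \<and> x k \<noteq> antip (x i) \<and> x k \<noteq> antip (x j)"
    using A nonantip ij by (auto simp: nearly_antipodal_def)
  have "(1 - 2 * cdist (x i) (x j)) * real (alpha n x (x i) (x j))
      < (1 - 2 * cdist (x i) (x j)) * real (alpha n y (x i) (x j))"
    using ineq pair_distance_sum_exact[OF a b ab xG avoid] pair_distance_sum_lower[OF a b ab yG]
    by linarith
  moreover have "0 < 1 - 2 * cdist (x i) (x j)" using cdist_lt_half[OF a b ab(2)] by simp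
  ultimately show ?thesis by (simp add: mult_less_cancel_left)
qed

end
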